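(* Let $x_0,\ldots,x_k$ be points of the unit sphere $\mathcal S_n\subset\mathbb R^{n+1}$ ($n\ge1$) with its canonical metric, and $X=[x_0,\ldots,x_k]$ the $(n+1)\times(k+1)$ matrix of their coordinates. Then $x_0,\ldots,x_k$ are affinely independent if and only if $\mathrm{rank}(X)=k+1$.
   Context: On $\mathcal S_n$ with the metric induced by $\mathbb R^{n+1}$, the cut locus of $x$ is $\{-x\}$ and $\log_x(y)=\frac{\theta}{\sin\theta}(y-\cos\theta\,x)$ with $\theta=\arccos(x^\top y)$. Points $x_0,\ldots,x_k$ of a Riemannian manifold are affinely independent if no $x_j$ ($j\neq i$) lies in the cut locus of $x_i$ and, for every $i$, the $k$ vectors $\{\log_{x_i}(x_j)\}_{j\ne i}$ are linearly independent in $T_{x_i}\mathcal S_n$. *)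

theory Defs
  imports "HOL-Analysis.Analysis"
begin

text \<open>The unit sphere S_n in R^(n+1); the ambient space R^(n+1) is real^'n with CARD('n) = n+1.\<close>
definition unit_sphere :: "(real^'n) set" where
  "unit_sphere = sphere 0 1"

definition sphere_cut_locus :: "real^'n \<Rightarrow> (real^'n) set" where
  "sphere_cut_locus x = {-x}"

definition sphere_log :: "real^'n \<Rightarrow> real^'n \<Rightarrow> real^'n" where
  "sphere_log x y = (let \<theta> = arccos (x \<bullet> y) in (\<theta> / sin \<theta>) *\<^sub>R (y - cos \<theta> *\<^sub>R x))"

text \<open>Linear independence of a family v indexed by J (as a family, counting repetitions).\<close>
definition lin_indep_family :: "'i set \<Rightarrow> ('i \<Rightarrow> real^'n) \<Rightarrow> bool" where
  "lin_indep_family J v \<longleftrightarrow>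
     (\<forall>c. (\<Sum>j\<in>J. c j *\<^sub>R v j) = 0 \<longrightarrow> (\<forall>j\<in>J. c j = 0))"

text \<open>Affine independence of points x_i (i ranging over the finite index type 'k,
  which plays the role of {0,...,k}) on the sphere.\<close>
definition sphere_aff_indep :: "('k::finite \<Rightarrow> real^'n) \<Rightarrow> bool" where
  "sphere_aff_indep x \<longleftrightarrow>
     (\<forall>i j. j \<noteq> i \<longrightarrow> x j \<notin> sphere_cut_locus (x i)) \<and>
     (\<forall>i. lin_indep_family (UNIV - {i}) (\<lambda>j. sphere_log (x i) (x j)))"

text \<open>Coordinate matrix X = [x_0, ..., x_k]: rows indexed by 'n, columns by 'k.\<close>
definition coord_matrix :: "('k::finite \<Rightarrow> real^'n) \<Rightarrow> real^'k^'n" where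
  "coord_matrix x = (\<chi> r c. x c $ r)"

end

theory Submission
  imports Defs
begin

text \<open>On the sphere, \<open>log\<^sub>x y\<close> is a nonzero multiple of the component of \<open>y\<close> orthogonal
  to \<open>x\<close> as long as \<open>y \<noteq> \<plusminus>x\<close>. So, for a fixed base point \<open>x\<^sub>i\<close>, the logarithms of the
  other points are linearly independent iff their projections onto \<open>x\<^sub>i\<^sup>\<bottom>\<close> are, and since
  \<open>x\<^sub>i\<close> itself projects to zero this happens iff all of \<open>x\<^sub>0, \<dots>, x\<^sub>k\<close> are linearly
  independent, i.e. iff the coordinate matrix has full column rank. Linear independence
  also rules out \<open>x\<^sub>j = -x\<^sub>i\<close>, so the cut-locus condition comes for free.\<close>

lemma coord_matrix_mult_vec: "coord_matrix x *v c = (\<Sum>j\<in>UNIV. c $ j *\<^sub>R x j)"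
  by (simp add: vec_eq_iff matrix_vector_mult_def coord_matrix_def mult.commute)

lemma rank_coord_matrix_eq_card_iff:
  fixes x :: "'k::finite \<Rightarrow> real^'n"
  shows "rank (coord_matrix x) = CARD('k) \<longleftrightarrow> lin_indep_family UNIV x"
proof -
  have "rank (coord_matrix x) = CARD('k) \<longleftrightarrow> (\<forall>c. coord_matrix x *v c = 0 \<longrightarrow> c = 0)"
    using matrix_nonfull_linear_equations_eq[of "coord_matrix x"] by blast
  also have "\<dots> \<longleftrightarrow> lin_indep_family UNIV x"
  proof
    assume trivial_kernel: "\<forall>c. coord_matrix x *v c = 0 \<longrightarrow> c = 0"
    show "lin_indep_family UNIV x"
      unfolding lin_indep_family_def
    proof (intro allI impI)
      fix c assume "(\<Sum>j\<in>UNIV. c j *\<^sub>R x j) = 0"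
      then have "coord_matrix x *v (\<chi> j. c j) = 0" by (simp add: coord_matrix_mult_vec)
      then have "(\<chi> j. c j) = 0" using trivial_kernel by blast
      then show "\<forall>j\<in>UNIV. c j = 0" by (simp add: vec_eq_iff)
    qed
  next
    assume "lin_indep_family UNIV x"
    then show "\<forall>c. coord_matrix x *v c = 0 \<longrightarrow> c = 0"
      unfolding lin_indep_family_def by (auto simp: coord_matrix_mult_vec vec_eq_iff)
  qed
  finally show ?thesis .
qed

lemma lin_indep_familyD:
  "lin_indep_family J v \<Longrightarrow> (\<Sum>j\<in>J. c j *\<^sub>R v j) = 0 \<Longrightarrow> j \<in> J \<Longrightarrow> c j = 0"
  unfolding lin_indep_family_def by blast

lemma lin_indep_family_scaleR_iff:
  assumes "\<forall>j\<in>J. s j \<noteq> 0"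
  shows "lin_indep_family J (\<lambda>j. s j *\<^sub>R v j) \<longleftrightarrow> lin_indep_family J v"
proof
  assume indep: "lin_indep_family J (\<lambda>j. s j *\<^sub>R v j)"
  show "lin_indep_family J v"
    unfolding lin_indep_family_def
  proof (intro allI impI)
    fix c assume "(\<Sum>j\<in>J. c j *\<^sub>R v j) = 0"
    moreover have "(\<Sum>j\<in>J. (c j / s j) *\<^sub>R (s j *\<^sub>R v j)) = (\<Sum>j\<in>J. c j *\<^sub>R v j)"
      using assms by (intro sum.cong) auto
    ultimately have "\<forall>j\<in>J. c j / s j = 0"
      using indep unfolding lin_indep_family_def by metis
    then show "\<forall>j\<in>J. c j = 0" using assms by auto
  qed
next
  assume indep: "lin_indep_family J v"
  show "lin_indep_family J (\<lambda>j. s j *\<^sub>R v j)"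
    unfolding lin_indep_family_def
  proof (intro allI impI)
    fix c assume "(\<Sum>j\<in>J. c j *\<^sub>R s j *\<^sub>R v j) = 0"
    then have "(\<Sum>j\<in>J. (c j * s j) *\<^sub>R v j) = 0" by simp
    then show "\<forall>j\<in>J. c j = 0"
      using lin_indep_familyD[OF indep, of "\<lambda>j. c j * s j"] assms by auto
  qed
qed

lemma lin_indep_family_scaleR_nonzero:
  assumes "lin_indep_family J (\<lambda>j. s j *\<^sub>R v j)" and "j \<in> J"
  shows "s j \<noteq> 0"
proof
  assume "s j = 0"
  then have "(\<Sum>k\<in>J. (if k = j then 1 else 0) *\<^sub>R s k *\<^sub>R v k) = 0"
    by (intro sum.neutral) auto
  with assms have "(if j = j then 1 else 0 :: real) = 0"
    by (intro lin_indep_familyD[of J "\<lambda>j. s j *\<^sub>R v j"]) auto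
  then show False by simp
qed

text \<open>Removing the \<open>x\<^sub>i\<close>-component of every vector: the coefficient lost on \<open>x\<^sub>i\<close> is
  recovered from the components of the others, and conversely the projection kills
  \<open>x\<^sub>i\<close> itself.\<close>

lemma lin_indep_family_projection_iff:
  fixes x :: "'k::finite \<Rightarrow> real^'n"
  assumes unit: "x i \<bullet> x i = 1"
  shows "lin_indep_family UNIV x \<longleftrightarrow>
    lin_indep_family (UNIV - {i}) (\<lambda>j. x j - (x i \<bullet> x j) *\<^sub>R x i)"
proof
  assume indep: "lin_indep_family UNIV x"
  show "lin_indep_family (UNIV - {i}) (\<lambda>j. x j - (x i \<bullet> x j) *\<^sub>R x i)"
    unfolding lin_indep_family_def
  proof (intro allI impI)
    fix c assume proj_sum: "(\<Sum>j\<in>UNIV - {i}. c j *\<^sub>R (x j - (x i \<bullet> x j) *\<^sub>R x i)) = 0"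
    define d where "d = c(i := - (\<Sum>j\<in>UNIV - {i}. c j * (x i \<bullet> x j)))"
    have "(\<Sum>j\<in>UNIV. d j *\<^sub>R x j) = d i *\<^sub>R x i + (\<Sum>j\<in>UNIV - {i}. d j *\<^sub>R x j)"
      by (simp add: sum.remove)
    also have "(\<Sum>j\<in>UNIV - {i}. d j *\<^sub>R x j) = (\<Sum>j\<in>UNIV - {i}. c j *\<^sub>R x j)"
      by (rule sum.cong) (auto simp: d_def)
    also have "d i *\<^sub>R x i + (\<Sum>j\<in>UNIV - {i}. c j *\<^sub>R x j)
        = (\<Sum>j\<in>UNIV - {i}. c j *\<^sub>R (x j - (x i \<bullet> x j) *\<^sub>R x i))"
      by (simp add: d_def scaleR_diff_right sum_subtractf scaleR_left.sum)
    finally have "\<forall>j. d j = 0"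
      using indep proj_sum unfolding lin_indep_family_def by simp
    then show "\<forall>j\<in>UNIV - {i}. c j = 0" by (auto simp: d_def split: if_splits)
  qed
next
  assume indep: "lin_indep_family (UNIV - {i}) (\<lambda>j. x j - (x i \<bullet> x j) *\<^sub>R x i)"
  show "lin_indep_family UNIV x"
    unfolding lin_indep_family_def
  proof (intro allI impI)
    fix c assume sum_0: "(\<Sum>j\<in>UNIV. c j *\<^sub>R x j) = 0"
    define P where "P v = v - (x i \<bullet> v) *\<^sub>R x i" for v
    have "linear P"
      unfolding P_def linear_iff by (simp add: algebra_simps)
    then have "P (\<Sum>j\<in>UNIV. c j *\<^sub>R x j) = (\<Sum>j\<in>UNIV. c j *\<^sub>R P (x j))"
      by (simp add: linear_sum linear_scale)
    then have "0 = (\<Sum>j\<in>UNIV. c j *\<^sub>R P (x j))"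
      using sum_0 \<open>linear P\<close> by (simp add: linear_0)
    also have "\<dots> = (\<Sum>j\<in>UNIV - {i}. c j *\<^sub>R P (x j))"
      using unit by (simp add: sum.remove[of UNIV i] P_def)
    finally have "(\<Sum>j\<in>UNIV - {i}. c j *\<^sub>R P (x j)) = 0" ..
    then have others: "\<forall>j\<in>UNIV - {i}. c j = 0"
      using indep unfolding lin_indep_family_def P_def by blast
    then have "c i *\<^sub>R x i = 0"
      using sum_0 by (simp add: sum.remove[of UNIV i])
    moreover have "x i \<noteq> 0" using unit by auto
    ultimately show "\<forall>j\<in>UNIV. c j = 0" using others by auto
  qed
qed

lemma lin_indep_family_not_collinear:
  fixes x :: "'k::finite \<Rightarrow> real^'n"
  assumes "lin_indep_family UNIV x" and "j \<noteq> i"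
  shows "x j \<noteq> a *\<^sub>R x i"
proof
  assume collinear: "x j = a *\<^sub>R x i"
  define c where "c k = (if k = j then 1 else if k = i then - a else 0)" for k
  have "c k *\<^sub>R x k = (if k = j then x j else 0) - (if k = i then a *\<^sub>R x i else 0)" for k
    using \<open>j \<noteq> i\<close> by (simp add: c_def)
  then have "(\<Sum>k\<in>UNIV. c k *\<^sub>R x k) = x j - a *\<^sub>R x i"
    by (simp add: sum_subtractf)
  with collinear assms(1) have "c j = 0"
    by (intro lin_indep_familyD[of UNIV x]) auto
  then show False by (simp add: c_def)
qed

lemma unit_inner_abs_less_1:
  fixes a b :: "real^'n"
  assumes "norm a = 1" "norm b = 1" "b \<noteq> a" "b \<noteq> - a"
  shows "\<bar>a \<bullet> b\<bar> < 1"
  using assms Cauchy_Schwarz_ineq2[of a b] norm_cauchy_schwarz_abs_eq[of a b]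
  by (auto simp: less_le)

lemma sphere_log_unit:
  fixes a b :: "real^'n"
  assumes "norm a = 1" "norm b = 1"
  shows "sphere_log a b =
    (arccos (a \<bullet> b) / sin (arccos (a \<bullet> b))) *\<^sub>R (b - (a \<bullet> b) *\<^sub>R a)"
proof -
  have "\<bar>a \<bullet> b\<bar> \<le> 1" using Cauchy_Schwarz_ineq2[of a b] assms by simp
  then show ?thesis by (simp add: sphere_log_def Let_def cos_arccos_abs)
qed

lemma arccos_div_sin_arccos_nonzero:
  assumes "\<bar>t\<bar> < 1"
  shows "arccos t / sin (arccos t) \<noteq> 0"
proof -
  have "- 1 < t" "t < 1" using assms by auto
  then show ?thesis using arccos_lt_bounded[of t] sin_arccos_nonzero[of t] by simp
qed

lemma sphere_log_family_indep_imp_lin_indep: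
  fixes x :: "'k::finite \<Rightarrow> real^'n"
  assumes unit: "\<forall>j. norm (x j) = 1"
    and logs_indep: "lin_indep_family (UNIV - {i}) (\<lambda>j. sphere_log (x i) (x j))"
  shows "lin_indep_family UNIV x"
proof -
  let ?s = "\<lambda>j. arccos (x i \<bullet> x j) / sin (arccos (x i \<bullet> x j))"
  let ?p = "\<lambda>j. x j - (x i \<bullet> x j) *\<^sub>R x i"
  have indep: "lin_indep_family (UNIV - {i}) (\<lambda>j. ?s j *\<^sub>R ?p j)"
    using logs_indep unit by (simp add: sphere_log_unit)
  then have "\<forall>j\<in>UNIV - {i}. ?s j \<noteq> 0"
    using lin_indep_family_scaleR_nonzero[OF indep] by blast
  then have "lin_indep_family (UNIV - {i}) ?p"
    using indep by (rule lin_indep_family_scaleR_iff[THEN iffD1])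
  then show ?thesis
    using lin_indep_family_projection_iff[of x i] unit by (simp add: dot_square_norm)
qed

lemma lin_indep_imp_sphere_log_family_indep:
  fixes x :: "'k::finite \<Rightarrow> real^'n"
  assumes unit: "\<forall>j. norm (x j) = 1"
    and indep: "lin_indep_family UNIV x"
  shows "lin_indep_family (UNIV - {i}) (\<lambda>j. sphere_log (x i) (x j))"
proof -
  let ?s = "\<lambda>j. arccos (x i \<bullet> x j) / sin (arccos (x i \<bullet> x j))"
  let ?p = "\<lambda>j. x j - (x i \<bullet> x j) *\<^sub>R x i"
  have "\<bar>x i \<bullet> x j\<bar> < 1" if "j \<noteq> i" for j
    using lin_indep_family_not_collinear[OF indep that, of 1]
      lin_indep_family_not_collinear[OF indep that, of "- 1"] unit
    by (intro unit_inner_abs_less_1) auto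
  then have "\<forall>j\<in>UNIV - {i}. ?s j \<noteq> 0"
    using arccos_div_sin_arccos_nonzero by blast
  moreover have "lin_indep_family (UNIV - {i}) ?p"
    using lin_indep_family_projection_iff[of x i] indep unit by (simp add: dot_square_norm)
  ultimately have "lin_indep_family (UNIV - {i}) (\<lambda>j. ?s j *\<^sub>R ?p j)"
    by (rule lin_indep_family_scaleR_iff[THEN iffD2])
  then show ?thesis
    using unit by (simp add: sphere_log_unit)
qed

theorem mainTheorem4:
  fixes x :: "'k::finite \<Rightarrow> real^'n"
  assumes "CARD('n) \<ge> 2"
    and "\<forall>i. x i \<in> unit_sphere"
  shows "sphere_aff_indep x \<longleftrightarrow> rank (coord_matrix x) = CARD('k)"
proof -
  have unit: "\<forall>i. norm (x i) = 1" using assms(2) by (simp add: unit_sphere_def)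
  have "sphere_aff_indep x \<longleftrightarrow> lin_indep_family UNIV x"
  proof
    assume "sphere_aff_indep x"
    then show "lin_indep_family UNIV x"
      unfolding sphere_aff_indep_def using sphere_log_family_indep_imp_lin_indep[OF unit] by blast
  next
    assume indep: "lin_indep_family UNIV x"
    have "x j \<notin> sphere_cut_locus (x i)" if "j \<noteq> i" for i j
      using lin_indep_family_not_collinear[OF indep that, of "- 1"] by (simp add: sphere_cut_locus_def)
    then show "sphere_aff_indep x"
      unfolding sphere_aff_indep_def using lin_indep_imp_sphere_log_family_indep[OF unit indep] by blast
  qed
  then show ?thesis by (simp add: rank_coord_matrix_eq_card_iff)
qed

end
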